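(* Let $\mathcal{D}$ be a $\{K_3,K_4\}$-decomposition of $K_{18}$ with $\alpha=13$, let $W$ be the set of vertices $x$ with $\alpha_x\ge 2$, and for $i\in\{0,1,2,3\}$ let $t_i$ be the number of copies of $K_3$ in $\mathcal{D}$ having exactly $i$ vertices in $W$. Then $(t_0,t_1,t_2,t_3)\neq(0,4,3,6)$.
   Context: A $\{K_3,K_4\}$-decomposition of $K_v$ is a collection of subgraphs, each isomorphic to $K_3$ or $K_4$, such that every edge of $K_v$ lies in exactly one of them. $\alpha$ is the number of copies of $K_3$ in the decomposition, and for a vertex $x$, $\alpha_x$ is the number of copies of $K_3$ in the decomposition containing $x$. *)

theory Defs
  imports Main
begin

text \<open>A {K3,K4}-decomposition of the complete graph on vertex set V: a collection
of vertex sets (each spanning a copy of K3 or K4) such that every edge {x,y}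
of K_V lies in exactly one of them.\<close>
definition K34_decomp :: "'a set \<Rightarrow> 'a set set \<Rightarrow> bool" where
  "K34_decomp V D \<longleftrightarrow>
     (\<forall>B\<in>D. B \<subseteq> V \<and> (card B = 3 \<or> card B = 4)) \<and>
     (\<forall>x\<in>V. \<forall>y\<in>V. x \<noteq> y \<longrightarrow> (\<exists>!B. B \<in> D \<and> x \<in> B \<and> y \<in> B))"

definition alpha :: "'a set set \<Rightarrow> nat" where
  "alpha D = card {B\<in>D. card B = 3}"

definition alpha_v :: "'a set set \<Rightarrow> 'a \<Rightarrow> nat" where
  "alpha_v D x = card {B\<in>D. card B = 3 \<and> x \<in> B}"

definition Wset :: "'a set \<Rightarrow> 'a set set \<Rightarrow> 'a set" where
  "Wset V D = {x\<in>V. alpha_v D x \<ge> 2}"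

definition tcount :: "'a set \<Rightarrow> 'a set set \<Rightarrow> nat \<Rightarrow> nat" where
  "tcount V D i = card {B\<in>D. card B = 3 \<and> card (B \<inter> Wset V D) = i}"

end

theory Submission
  imports Defs
begin

text \<open>
  Write \<open>\<beta>\<^sub>x\<close> for the number of copies of \<open>K\<^sub>4\<close> through \<open>x\<close> and
  \<open>c\<^sub>B = |B \<inter> W|\<close>. The 17 edges at a vertex give \<open>2\<alpha>\<^sub>x + 3\<beta>\<^sub>x = 17\<close>, so
  \<open>\<alpha>\<^sub>x = 1\<close> outside \<open>W\<close>; counting triangle--vertex incidences then yields
  \<open>|V - W| = 3\<alpha> - \<Sum>i t\<^sub>i = 39 - 28\<close>, hence \<open>|W| = 7\<close>. The triangles cover
  \<open>\<Sum>(c\<^sub>B choose 2) = 3 + 18 = 21\<close> pairs of \<open>W\<close>, i.e. all of them, so every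
  \<open>K\<^sub>4\<close> meets \<open>W\<close> at most once. On the other hand counting the edges between
  \<open>W\<close> and \<open>V\<close> shows that the copies of \<open>K\<^sub>4\<close> meet \<open>W\<close> 21 times in total,
  while counting all edges shows that there are only 19 of them.
\<close>

lemma sum_card_Int_mult_eq_sum_incident:
  assumes "finite F" "finite S"
  shows "(\<Sum>B\<in>F. card (B \<inter> S) * g B) = (\<Sum>x\<in>S. \<Sum>B\<in>{B\<in>F. x \<in> B}. g B)"
proof -
  have "(\<Sum>B\<in>F. card (B \<inter> S) * g B) = (\<Sum>B\<in>F. \<Sum>x\<in>S. if x \<in> B then g B else 0)"
    using assms(2) by (simp add: sum.inter_restrict[symmetric] Int_commute)
  also have "\<dots> = (\<Sum>x\<in>S. \<Sum>B\<in>F. if x \<in> B then g B else 0)"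
    by (rule sum.swap)
  also have "\<dots> = (\<Sum>x\<in>S. \<Sum>B\<in>{B\<in>F. x \<in> B}. g B)"
    using assms(1) by (simp add: sum.inter_filter)
  finally show ?thesis .
qed

lemma sum_comp_eq_sum_card_fibres:
  fixes g :: "'a \<Rightarrow> nat"
  assumes "finite A" "\<And>a. a \<in> A \<Longrightarrow> g a \<le> n"
  shows "(\<Sum>a\<in>A. f (g a)) = (\<Sum>i\<le>n. f i * card {a\<in>A. g a = i})"
proof -
  have "(\<Sum>a\<in>A. f (g a)) = (\<Sum>a\<in>A. \<Sum>i\<le>n. if g a = i then f i else 0)"
    using assms(2) by (intro sum.cong) auto
  also have "\<dots> = (\<Sum>i\<le>n. \<Sum>a\<in>A. if g a = i then f i else 0)"
    by (rule sum.swap)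
  also have "\<dots> = (\<Sum>i\<le>n. \<Sum>a\<in>{a\<in>A. g a = i}. f i)"
    by (rule sum.cong[OF refl], rule sum.inter_filter[OF assms(1), symmetric])
  finally show ?thesis
    by (simp add: mult.commute)
qed

lemma sum_le_card_plus_sum_pairs:
  fixes f :: "'a \<Rightarrow> nat"
  shows "(\<Sum>a\<in>A. f a) \<le> card A + (\<Sum>a\<in>A. f a * (f a - 1))"
proof -
  have "c \<le> 1 + c * (c - 1)" for c :: nat
    by (cases c) auto
  then have "(\<Sum>a\<in>A. f a) \<le> (\<Sum>a\<in>A. 1 + f a * (f a - 1))"
    by (intro sum_mono)
  then show ?thesis
    by (simp only: sum.distrib card_eq_sum)
qed

lemma K34_decomp_finite:
  assumes "K34_decomp V D" "finite V"
  shows "finite D"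
  using assms unfolding K34_decomp_def by (meson PowI finite_Pow_iff rev_finite_subset subsetI)

lemma K34_decomp_block_Int:
  assumes "K34_decomp V D" "B \<in> D"
  shows "B \<inter> V = B"
  using assms unfolding K34_decomp_def by blast

lemma K34_decomp_sum_split:
  assumes "K34_decomp V D" "finite D"
  shows "(\<Sum>B\<in>D. h B) = (\<Sum>B\<in>{B\<in>D. card B = 3}. h B) + (\<Sum>B\<in>{B\<in>D. card B = 4}. h B)"
proof -
  have "D = {B\<in>D. card B = 3} \<union> {B\<in>D. card B = 4}"
    using assms(1) unfolding K34_decomp_def by auto
  then show ?thesis
    using assms(2) by (subst (1) \<open>D = _\<close>, subst sum.union_disjoint) auto
qed

lemma K34_decomp_link:
  assumes K: "K34_decomp V D" and fin: "finite V" and x: "x \<in> V" and S: "S \<subseteq> V"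
  shows "(\<Sum>B\<in>{B\<in>D. x \<in> B}. card ((B - {x}) \<inter> S)) = card (S - {x})"
proof -
  have unique: "\<exists>!B. B \<in> D \<and> x \<in> B \<and> y \<in> B" if "y \<in> S - {x}" for y
    using K x S that unfolding K34_decomp_def by blast
  then have "S - {x} = (\<Union>B\<in>{B\<in>D. x \<in> B}. (B - {x}) \<inter> S)"
    by blast
  moreover have "card (\<Union>B\<in>{B\<in>D. x \<in> B}. (B - {x}) \<inter> S)
      = (\<Sum>B\<in>{B\<in>D. x \<in> B}. card ((B - {x}) \<inter> S))"
  proof (rule card_UN_disjoint)
    show "finite {B\<in>D. x \<in> B}"
      using K34_decomp_finite[OF K fin] by simp
    show "\<forall>B\<in>{B\<in>D. x \<in> B}. finite ((B - {x}) \<inter> S)"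
      using S fin finite_subset by blast
    show "\<forall>B\<in>{B\<in>D. x \<in> B}. \<forall>B'\<in>{B\<in>D. x \<in> B}. B \<noteq> B' \<longrightarrow>
        (B - {x}) \<inter> S \<inter> ((B' - {x}) \<inter> S) = {}"
      using unique by blast
  qed
  ultimately show ?thesis
    by simp
qed

lemma K34_decomp_vertex_degree:
  assumes K: "K34_decomp V D" and fin: "finite V" and x: "x \<in> V"
  shows "(\<Sum>B\<in>{B\<in>D. x \<in> B}. card B - 1) = card V - 1"
proof -
  have "card ((B - {x}) \<inter> V) = card B - 1" if "B \<in> D" "x \<in> B" for B
  proof -
    have "(B - {x}) \<inter> V = B - {x}"
      using K34_decomp_block_Int[OF K that(1)] by blast
    then show ?thesis
      using that(2) by simp
  qed
  then show ?thesis
    using K34_decomp_link[OF K fin x subset_refl] x by simp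
qed

lemma K34_decomp_count_pairs:
  assumes K: "K34_decomp V D" and fin: "finite V" and "S \<subseteq> U" "U \<subseteq> V"
  shows "(\<Sum>B\<in>D. card (B \<inter> S) * (card (B \<inter> U) - 1)) = card S * (card U - 1)"
proof -
  have finD: "finite D" and finS: "finite S" and finU: "finite U"
    using K34_decomp_finite[OF K fin] assms(3,4) fin by (auto intro: finite_subset)
  have "(\<Sum>B\<in>D. card (B \<inter> S) * (card (B \<inter> U) - 1))
      = (\<Sum>x\<in>S. \<Sum>B\<in>{B\<in>D. x \<in> B}. card (B \<inter> U) - 1)"
    by (rule sum_card_Int_mult_eq_sum_incident[OF finD finS])
  also have "\<dots> = (\<Sum>x\<in>S. \<Sum>B\<in>{B\<in>D. x \<in> B}. card ((B - {x}) \<inter> U))"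
  proof (intro sum.cong refl)
    fix x B
    assume "x \<in> S" "B \<in> {B\<in>D. x \<in> B}"
    then have "x \<in> B \<inter> U" "(B - {x}) \<inter> U = B \<inter> U - {x}"
      using assms(3) by auto
    then show "card (B \<inter> U) - 1 = card ((B - {x}) \<inter> U)"
      using finU by simp
  qed
  also have "\<dots> = (\<Sum>x\<in>S. card (U - {x}))"
    using K34_decomp_link[OF K fin] assms(3,4) by (intro sum.cong) auto
  also have "\<dots> = (\<Sum>x\<in>S. card U - 1)"
    using assms(3) finU by (intro sum.cong) auto
  also have "\<dots> = card S * (card U - 1)"
    by simp
  finally show ?thesis .
qed

lemma K34_decomp_count_edges:
  assumes K: "K34_decomp V D" and fin: "finite V"
  shows "6 * alpha D + 12 * card {B\<in>D. card B = 4} = card V * (card V - 1)"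
proof -
  have "card V * (card V - 1) = (\<Sum>B\<in>D. card (B \<inter> V) * (card (B \<inter> V) - 1))"
    using K34_decomp_count_pairs[OF K fin subset_refl subset_refl] by simp
  also have "\<dots> = 6 * alpha D + 12 * card {B\<in>D. card B = 4}"
    by (simp add: K34_decomp_sum_split[OF K K34_decomp_finite[OF K fin]] K34_decomp_block_Int[OF K] alpha_def)
  finally show ?thesis ..
qed

lemma K34_decomp_alpha_v_pos:
  assumes K: "K34_decomp V D" and fin: "finite V" and x: "x \<in> V"
    and "\<not> 3 dvd card V - 1"
  shows "alpha_v D x > 0"
proof (rule ccontr)
  assume "\<not> alpha_v D x > 0"
  then have "{B\<in>D. card B = 3 \<and> x \<in> B} = {}"
    using K34_decomp_finite[OF K fin] by (simp add: alpha_v_def)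
  then have "\<forall>B\<in>{B\<in>D. x \<in> B}. card B - 1 = 3"
    using K unfolding K34_decomp_def by auto
  then have "card V - 1 = 3 * card {B\<in>D. x \<in> B}"
    using K34_decomp_vertex_degree[OF K fin x] by simp
  then show False
    using assms(4) by simp
qed

lemma sum_alpha_v:
  assumes "finite D" "finite S"
  shows "(\<Sum>x\<in>S. alpha_v D x) = (\<Sum>B\<in>{B\<in>D. card B = 3}. card (B \<inter> S))"
  using sum_card_Int_mult_eq_sum_incident[of "{B\<in>D. card B = 3}" S "\<lambda>_. 1"] assms
  by (simp add: alpha_v_def conj_ac)

lemma sum_triangles_tcount:
  assumes "finite D"
  shows "(\<Sum>B\<in>{B\<in>D. card B = 3}. f (card (B \<inter> Wset V D)))
    = f 0 * tcount V D 0 + f 1 * tcount V D 1 + f 2 * tcount V D 2 + f 3 * tcount V D 3"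
proof -
  have "card (B \<inter> Wset V D) \<le> 3" if "B \<in> {B\<in>D. card B = 3}" for B
    using that card_mono[OF card_ge_0_finite Int_lower1, of B "Wset V D"] by simp
  then have "(\<Sum>B\<in>{B\<in>D. card B = 3}. f (card (B \<inter> Wset V D))) = (\<Sum>i\<le>3. f i * tcount V D i)"
    using assms by (subst sum_comp_eq_sum_card_fibres[where n = 3]) (auto simp: tcount_def)
  then show ?thesis
    by (simp add: numeral_3_eq_3 numeral_2_eq_2)
qed

lemma card_compl_Wset_tcount:
  assumes K: "K34_decomp V D" and fin: "finite V" and "\<not> 3 dvd card V - 1"
  shows "card (V - Wset V D) + tcount V D 1 + 2 * tcount V D 2 + 3 * tcount V D 3 = 3 * alpha D"
proof -
  let ?W = "Wset V D" and ?T = "{B\<in>D. card B = 3}"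
  have finD: "finite D"
    using K34_decomp_finite[OF K fin] .
  have W_sub: "?W \<subseteq> V"
    by (auto simp: Wset_def)
  have alpha_v_outside: "alpha_v D x = 1" if "x \<in> V - ?W" for x
    using K34_decomp_alpha_v_pos[OF K fin _ assms(3), of x] that by (auto simp: Wset_def)
  have "3 * alpha D = (\<Sum>B\<in>?T. card (B \<inter> V))"
    by (simp add: K34_decomp_block_Int[OF K] alpha_def)
  also have "\<dots> = (\<Sum>x\<in>V. alpha_v D x)"
    using sum_alpha_v[OF finD fin] ..
  also have "\<dots> = (\<Sum>x\<in>V - ?W. alpha_v D x) + (\<Sum>x\<in>?W. alpha_v D x)"
    using sum.subset_diff[OF W_sub fin] .
  also have "(\<Sum>x\<in>V - ?W. alpha_v D x) = card (V - ?W)"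
    using alpha_v_outside by simp
  also have "(\<Sum>x\<in>?W. alpha_v D x) = tcount V D 1 + 2 * tcount V D 2 + 3 * tcount V D 3"
    using sum_alpha_v[OF finD finite_subset[OF W_sub fin]] sum_triangles_tcount[OF finD, of "\<lambda>i. i"]
    by simp
  finally show ?thesis
    by simp
qed

theorem mainTheorem11:
  fixes D :: "nat set set"
  assumes "K34_decomp {..<18} D"
    and "alpha D = 13"
  shows "(tcount {..<18} D 0, tcount {..<18} D 1, tcount {..<18} D 2, tcount {..<18} D 3)
           \<noteq> (0, 4, 3, 6)"
proof
  define W where "W = Wset {..<18} D"
  define Q where "Q = {B\<in>D. card B = 4}"
  assume t: "(tcount {..<18} D 0, tcount {..<18} D 1, tcount {..<18} D 2, tcount {..<18} D 3)
           = (0, 4, 3, 6)"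
  note K = assms(1)
  have finD: "finite D"
    using K34_decomp_finite[OF K] by simp
  have W_sub: "W \<subseteq> {..<18}"
    by (auto simp: W_def Wset_def)
  note split_D = K34_decomp_sum_split[OF K finD, folded Q_def]
  note triangles = sum_triangles_tcount[OF finD, of _ "{..<18}", folded W_def]
  have card_W: "card W = 7"
    using card_compl_Wset_tcount[OF K] card_Diff_subset[OF finite_subset[OF W_sub] W_sub] t assms(2)
    by (simp add: W_def)
  have card_Q: "card Q = 19"
    using K34_decomp_count_edges[OF K] assms(2) by (simp add: Q_def)
  have "(\<Sum>B\<in>Q. card (B \<inter> W)) = 21"
    using K34_decomp_count_pairs[OF K _ W_sub subset_refl] triangles[of "\<lambda>i. i * 2"] t
    by (simp add: split_D K34_decomp_block_Int[OF K] card_W Q_def flip: sum_distrib_right)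
  moreover have "(\<Sum>B\<in>Q. card (B \<inter> W) * (card (B \<inter> W) - 1)) = 0"
    using K34_decomp_count_pairs[OF K _ subset_refl W_sub] triangles[of "\<lambda>i. i * (i - 1)"] t
    by (simp add: split_D card_W)
  ultimately show False
    using sum_le_card_plus_sum_pairs[of "\<lambda>B. card (B \<inter> W)" Q] card_Q by simp
qed

end
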